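(* For each integer $k\ge1$, the monoid $M_k$ is isomorphic to $I_k$.
   Context: Construction $\mu$: let $M$ be a monoid, $f\colon M\to M$ an endomorphism, and $t\in M$ such that $st=tf(s)$ for all $s\in M$. Then $\mu(M,t,f)=(N,\tau,\phi)$ where $N$ is the disjoint union of $M$ and $\{\tau s : s\in M\}$ ($\tau$ a new symbol, $\tau s$ denoting the pair $(\tau,s)$); writing $\tau^0s=s$ and $\tau^1 s=\tau s$, define $\phi\colon N\to M\subseteq N$ by $\phi(\tau^e s)=t^ef(s)$ and multiplication by $(\tau^{e_1}s_1)(\tau^{e_2}s_2)=\tau^{e_1}(s_1s_2)$ if $e_2=0$ and $=\tau(\phi(\tau^{e_1}s_1)s_2)$ if $e_2=1$; $\tau$ denotes $\tau 1_M$. Then $N$ is a monoid, $\phi$ an endomorphism of $N$, and $\sigma\tau=\tau\phi(\sigma)$ for all $\sigma\in N$. Recursively: $M_1$ is the one-element monoid, $t_1$ its unique element, $f_1$ its unique endomorphism; $(M_{k+1},t_{k+1},f_{k+1})=\mu(M_k,t_k,f_k)$. $I_k$ is the monoid under composition of all $g\colon\{0,\dots,k-1\}\to\{0,\dots,k-1\}$ with $g(0)=0$ and $g(i-1)\le g(i)\le g(i-1)+1$ for $0<i<k$. *)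

theory Defs
  imports "HOL-Algebra.Group" "HOL-Library.FuncSet"
begin

text \<open>Encoding: an element of the disjoint union N = M + {tau s : s in M} is encoded
  as the list e # s, where the Boolean e is the exponent of tau (False = 0, True = 1)
  and s is the (list-encoded) element of M.\<close>

type_synonym triple = "bool list monoid \<times> bool list \<times> (bool list \<Rightarrow> bool list)"

text \<open>phi restricted to values in M: phi(tau^e s) = t^e f(s).\<close>
definition mu_phi :: "bool list monoid \<Rightarrow> bool list \<Rightarrow> (bool list \<Rightarrow> bool list) \<Rightarrow> bool list \<Rightarrow> bool list" where
  "mu_phi M t f x = (if hd x then t \<otimes>\<^bsub>M\<^esub> f (tl x) else f (tl x))"

definition mu :: "triple \<Rightarrow> triple" where
  "mu T = (case T of (M, t, f) \<Rightarrow>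
     (\<lparr>carrier = {e # s | e s. s \<in> carrier M},
       mult = (\<lambda>x y. if \<not> hd y then hd x # (tl x \<otimes>\<^bsub>M\<^esub> tl y)
                      else True # (mu_phi M t f x \<otimes>\<^bsub>M\<^esub> tl y)),
       one = False # \<one>\<^bsub>M\<^esub>\<rparr>,
      True # \<one>\<^bsub>M\<^esub>,
      (\<lambda>x. False # mu_phi M t f x)))"

text \<open>Mseq n = (M_{n+1}, t_{n+1}, f_{n+1}).\<close>
fun Mseq :: "nat \<Rightarrow> triple" where
  "Mseq 0 = (\<lparr>carrier = {[]}, mult = (\<lambda>x y. []), one = []\<rparr>, [], (\<lambda>x. []))"
| "Mseq (Suc n) = mu (Mseq n)"

definition Mk :: "nat \<Rightarrow> bool list monoid" where
  "Mk k = fst (Mseq (k - 1))"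

definition Ik :: "nat \<Rightarrow> (nat \<Rightarrow> nat) monoid" where
  "Ik k = \<lparr>carrier = {g \<in> {0..<k} \<rightarrow>\<^sub>E {0..<k}. g 0 = 0 \<and>
              (\<forall>i. 0 < i \<and> i < k \<longrightarrow> g (i - 1) \<le> g i \<and> g i \<le> g (i - 1) + 1)},
           mult = (\<lambda>g h. restrict (g \<circ> h) {0..<k}),
           one = restrict id {0..<k}\<rparr>"

end

theory Submission
  imports Defs
begin

text \<open>An element of \<open>M\<^sub>n\<^sub>+\<^sub>1\<close> is a Boolean list of length \<open>n\<close>; send it to the
  map sending \<open>i \<le> n\<close> to the number of \<open>False\<close> entries among its first \<open>i\<close> letters.
  Such a map starts at 0 and has increments 0 or 1, and every such map comes from exactly one
  list, so this is a bijection onto \<open>I\<^sub>n\<^sub>+\<^sub>1\<close>. It is a homomorphism by induction along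
  the construction \<open>\<mu>\<close>: \<open>\<tau>\<close> becomes \<open>i \<mapsto> i - 1\<close>, \<open>\<phi>\<close> becomes the shift
  \<open>g \<mapsto> (0 \<mapsto> 0, i \<mapsto> g (i - 1) + 1)\<close>, and the multiplication rule of \<open>\<mu>\<close> turns into
  composition of maps.\<close>

definition false_count :: "bool list \<Rightarrow> nat \<Rightarrow> nat" where
  "false_count l i = length (filter Not (take i l))"

lemma false_count_0 [simp]: "false_count l 0 = 0"
  by (simp add: false_count_def)

lemma false_count_Cons_Suc [simp]:
  "false_count (e # s) (Suc i) = false_count s i + (if e then 0 else 1)"
  by (simp add: false_count_def)

lemma false_count_Cons:
  "false_count (e # s) i = (if i = 0 then 0 else false_count s (i - 1) + (if e then 0 else 1))"
  by (cases i) auto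

lemma false_count_le: "false_count l i \<le> i"
  unfolding false_count_def using length_filter_le[of Not "take i l"] by simp

lemma false_count_Suc:
  "i < length l \<Longrightarrow> false_count l (Suc i) = false_count l i + (if l ! i then 0 else 1)"
  by (simp add: false_count_def take_Suc_conv_app_nth)

lemma false_count_eqI:
  assumes "length x = n" "length y = n" "\<forall>i\<le>n. false_count x i = false_count y i"
  shows "x = y"
proof (rule nth_equalityI)
  show "length x = length y" using assms by simp
  fix i assume "i < length x"
  then have "false_count x (Suc i) = false_count y (Suc i)" "false_count x i = false_count y i"
    using assms by auto
  with \<open>i < length x\<close> assms show "x ! i = y ! i"
    by (auto simp: false_count_Suc split: if_splits)
qed

lemma false_count_of_steps:
  assumes "g 0 = 0" "\<And>i. i < n \<Longrightarrow> g i \<le> g (Suc i) \<and> g (Suc i) \<le> g i + 1" "i \<le> n"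
  shows "false_count (map (\<lambda>j. g (Suc j) = g j) [0..<n]) i = g i"
  using assms(3)
proof (induction i)
  case 0
  then show ?case using assms(1) by simp
next
  case (Suc i)
  then show ?case using assms(2)[of i] by (auto simp: false_count_Suc)
qed

lemma false_count_in_Ik:
  assumes "length x = n"
  shows "restrict (false_count x) {0..<Suc n} \<in> carrier (Ik (Suc n))"
proof -
  have "restrict (false_count x) {0..<Suc n} \<in> {0..<Suc n} \<rightarrow>\<^sub>E {0..<Suc n}"
    using order_trans[OF false_count_le[of x]] by (auto simp: less_Suc_eq_le)
  moreover have
    "false_count x (i - 1) \<le> false_count x i \<and> false_count x i \<le> false_count x (i - 1) + 1"
    if "0 < i" "i < Suc n" for i
    using false_count_Suc[of "i - 1" x] that assms by auto
  ultimately show ?thesis by (auto simp: Ik_def)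
qed

definition prefix_count_model :: "nat \<Rightarrow> triple \<Rightarrow> bool" where
  "prefix_count_model n T \<longleftrightarrow> (case T of (M, t, f) \<Rightarrow>
     carrier M = {l. length l = n} \<and>
     (\<forall>x\<in>carrier M. \<forall>y\<in>carrier M. x \<otimes>\<^bsub>M\<^esub> y \<in> carrier M \<and>
        (\<forall>i\<le>n. false_count (x \<otimes>\<^bsub>M\<^esub> y) i = false_count x (false_count y i))) \<and>
     \<one>\<^bsub>M\<^esub> \<in> carrier M \<and> (\<forall>i\<le>n. false_count \<one>\<^bsub>M\<^esub> i = i) \<and>
     t \<in> carrier M \<and> (\<forall>i\<le>n. false_count t i = i - 1) \<and>
     (\<forall>x\<in>carrier M. f x \<in> carrier M \<and>
        (\<forall>i\<le>n. false_count (f x) i = (if i = 0 then 0 else false_count x (i - 1) + 1))))"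

lemma carrier_mu: "carrier (fst (mu (M, t, f))) = {e # s |e s. s \<in> carrier M}"
  by (simp add: mu_def)

lemma mult_mu:
  "x \<otimes>\<^bsub>fst (mu (M, t, f))\<^esub> y = (if \<not> hd y then hd x # (tl x \<otimes>\<^bsub>M\<^esub> tl y)
                                 else True # (mu_phi M t f x \<otimes>\<^bsub>M\<^esub> tl y))"
  by (simp add: mu_def)

lemma one_mu: "\<one>\<^bsub>fst (mu (M, t, f))\<^esub> = False # \<one>\<^bsub>M\<^esub>"
  by (simp add: mu_def)

context
  fixes n M t f
  assumes model: "prefix_count_model n (M, t, f)"
begin

lemma prefix_count_model_carrier: "carrier M = {l. length l = n}"
  using model unfolding prefix_count_model_def prod.case by blast

lemma prefix_count_model_mult_closed:
  "x \<in> carrier M \<Longrightarrow> y \<in> carrier M \<Longrightarrow> x \<otimes>\<^bsub>M\<^esub> y \<in> carrier M"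
  using model unfolding prefix_count_model_def prod.case by blast

lemma prefix_count_model_false_count_mult:
  "x \<in> carrier M \<Longrightarrow> y \<in> carrier M \<Longrightarrow> i \<le> n
    \<Longrightarrow> false_count (x \<otimes>\<^bsub>M\<^esub> y) i = false_count x (false_count y i)"
  using model unfolding prefix_count_model_def prod.case by blast

lemma prefix_count_model_one_closed: "\<one>\<^bsub>M\<^esub> \<in> carrier M"
  using model unfolding prefix_count_model_def prod.case by blast

lemma prefix_count_model_false_count_one: "i \<le> n \<Longrightarrow> false_count \<one>\<^bsub>M\<^esub> i = i"
  using model unfolding prefix_count_model_def prod.case by blast

lemma prefix_count_model_t_closed: "t \<in> carrier M"
  using model unfolding prefix_count_model_def prod.case by blast

lemma prefix_count_model_false_count_t: "i \<le> n \<Longrightarrow> false_count t i = i - 1"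
  using model unfolding prefix_count_model_def prod.case by blast

lemma prefix_count_model_f_closed: "x \<in> carrier M \<Longrightarrow> f x \<in> carrier M"
  using model unfolding prefix_count_model_def prod.case by blast

lemma prefix_count_model_false_count_f:
  "x \<in> carrier M \<Longrightarrow> i \<le> n
    \<Longrightarrow> false_count (f x) i = (if i = 0 then 0 else false_count x (i - 1) + 1)"
  using model unfolding prefix_count_model_def prod.case by blast

lemma mu_phi_in_carrier:
  assumes s: "s \<in> carrier M"
  shows "mu_phi M t f (e # s) \<in> carrier M"
  using s by (simp add: mu_phi_def prefix_count_model_mult_closed prefix_count_model_t_closed
      prefix_count_model_f_closed)

text \<open>On counts, \<open>\<phi>\<close> just forgets the last letter.\<close>
lemma false_count_mu_phi:
  assumes s: "s \<in> carrier M" and j: "j \<le> n"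
  shows "false_count (mu_phi M t f (e # s)) j = false_count (e # s) j"
proof (cases e)
  case True
  have fs: "f s \<in> carrier M" using prefix_count_model_f_closed[OF s] .
  have "false_count (t \<otimes>\<^bsub>M\<^esub> f s) j = false_count t (false_count (f s) j)"
    using prefix_count_model_false_count_mult[OF prefix_count_model_t_closed fs j] .
  also have "\<dots> = false_count (f s) j - 1"
    using prefix_count_model_false_count_t false_count_le[of "f s" j] j by simp
  also have "\<dots> = false_count (e # s) j"
    using prefix_count_model_false_count_f[OF s j] True by (simp add: false_count_Cons)
  finally show ?thesis using True by (simp add: mu_phi_def)
next
  case False
  then show ?thesis
    using prefix_count_model_false_count_f[OF s j] by (simp add: mu_phi_def false_count_Cons)
qed

lemma false_count_mult_mu:
  assumes x: "x \<in> carrier (fst (mu (M, t, f)))" and y: "y \<in> carrier (fst (mu (M, t, f)))"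
    and i: "i \<le> Suc n"
  shows "false_count (x \<otimes>\<^bsub>fst (mu (M, t, f))\<^esub> y) i = false_count x (false_count y i)"
proof -
  obtain e1 s1 where x1: "x = e1 # s1" "s1 \<in> carrier M" using x by (auto simp: carrier_mu)
  obtain e2 s2 where y1: "y = e2 # s2" "s2 \<in> carrier M" using y by (auto simp: carrier_mu)
  show ?thesis
  proof (cases i)
    case (Suc j)
    have j: "j \<le> n" "false_count s2 j \<le> n"
      using Suc i false_count_le[of s2 j] by auto
    show ?thesis
    proof (cases e2)
      case False
      then show ?thesis
        using prefix_count_model_false_count_mult[OF x1(2) y1(2) j(1)] Suc x1 y1
        by (simp add: mult_mu)
    next
      case True
      have phi: "mu_phi M t f x \<in> carrier M"
        using mu_phi_in_carrier[OF x1(2)] x1(1) by simp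
      have "false_count (x \<otimes>\<^bsub>fst (mu (M, t, f))\<^esub> y) i
          = false_count (mu_phi M t f x) (false_count s2 j)"
        using prefix_count_model_false_count_mult[OF phi y1(2) j(1)] Suc True y1(1)
        by (simp add: mult_mu)
      also have "\<dots> = false_count x (false_count s2 j)"
        using false_count_mu_phi[OF x1(2) j(2)] x1(1) by simp
      finally show ?thesis using Suc True y1(1) by simp
    qed
  qed (simp add: mult_mu x1 y1)
qed

lemma prefix_count_model_mu: "prefix_count_model (Suc n) (mu (M, t, f))"
proof -
  obtain N t' f' where N: "mu (M, t, f) = (N, t', f')" by (cases "mu (M, t, f)") auto
  have N_def: "N = fst (mu (M, t, f))" and t': "t' = True # \<one>\<^bsub>M\<^esub>"
    and f': "f' = (\<lambda>x. False # mu_phi M t f x)"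
    using N by (auto simp: mu_def)
  have one: "\<one>\<^bsub>N\<^esub> = False # \<one>\<^bsub>M\<^esub>" by (simp add: N_def one_mu)
  have mult: "x \<otimes>\<^bsub>N\<^esub> y = (if \<not> hd y then hd x # (tl x \<otimes>\<^bsub>M\<^esub> tl y)
                           else True # (mu_phi M t f x \<otimes>\<^bsub>M\<^esub> tl y))" for x y
    by (simp add: N_def mult_mu)
  have car: "carrier N = {e # s |e s. s \<in> carrier M}" by (simp add: N_def carrier_mu)
  have phi: "mu_phi M t f x \<in> carrier M" if "x \<in> carrier N" for x
    using that mu_phi_in_carrier by (auto simp: car)
  show ?thesis
    unfolding N prefix_count_model_def prod.case
  proof (intro conjI ballI allI impI)
    show "carrier N = {l. length l = Suc n}"
      by (auto simp: car prefix_count_model_carrier length_Suc_conv)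
  next
    fix x y assume "x \<in> carrier N" "y \<in> carrier N"
    then show "x \<otimes>\<^bsub>N\<^esub> y \<in> carrier N"
      using phi[of x] prefix_count_model_mult_closed by (auto simp: car mult)
  next
    fix x y i assume "x \<in> carrier N" "y \<in> carrier N" "i \<le> Suc n"
    then show "false_count (x \<otimes>\<^bsub>N\<^esub> y) i = false_count x (false_count y i)"
      unfolding N_def by (rule false_count_mult_mu)
  next
    show "\<one>\<^bsub>N\<^esub> \<in> carrier N"
      using prefix_count_model_one_closed unfolding car one by blast
  next
    fix i assume "i \<le> Suc n"
    then show "false_count \<one>\<^bsub>N\<^esub> i = i"
      using prefix_count_model_false_count_one by (simp add: one false_count_Cons)
  next
    show "t' \<in> carrier N"
      using prefix_count_model_one_closed unfolding car t' by blast
  next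
    fix i assume "i \<le> Suc n"
    then show "false_count t' i = i - 1"
      using prefix_count_model_false_count_one by (simp add: t' false_count_Cons)
  next
    fix x assume "x \<in> carrier N"
    then show "f' x \<in> carrier N" using phi[of x] unfolding car f' by blast
  next
    fix x i assume "x \<in> carrier N" and i: "i \<le> Suc n"
    then obtain e s where "x = e # s" "s \<in> carrier M" by (auto simp: car)
    then show "false_count (f' x) i = (if i = 0 then 0 else false_count x (i - 1) + 1)"
      using false_count_mu_phi[of s "i - 1" e] i by (simp add: f' false_count_Cons)
  qed
qed

lemma false_count_iso_Ik:
  defines "h \<equiv> \<lambda>l. restrict (false_count l) {0..<Suc n}"
  shows "h \<in> iso M (Ik (Suc n))" and "h \<one>\<^bsub>M\<^esub> = \<one>\<^bsub>Ik (Suc n)\<^esub>"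
proof -
  have hom: "h \<in> hom M (Ik (Suc n))"
  proof (rule homI)
    show "h x \<in> carrier (Ik (Suc n))" if "x \<in> carrier M" for x
      using false_count_in_Ik[of x n] that prefix_count_model_carrier by (simp add: h_def)
    fix x y assume "x \<in> carrier M" "y \<in> carrier M"
    then have "false_count (x \<otimes>\<^bsub>M\<^esub> y) i = false_count x (false_count y i)"
      if "i \<le> n" for i
      using prefix_count_model_false_count_mult that by blast
    then show "h (x \<otimes>\<^bsub>M\<^esub> y) = h x \<otimes>\<^bsub>Ik (Suc n)\<^esub> h y"
      using false_count_le[of y]
      by (auto simp: h_def Ik_def fun_eq_iff less_Suc_eq_le intro: le_trans)
  qed
  moreover have "inj_on h (carrier M)"
  proof (rule inj_onI)
    fix x y assume "x \<in> carrier M" "y \<in> carrier M" "h x = h y"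
    moreover have "false_count x i = false_count y i" if "i \<le> n" for i
      using fun_cong[OF \<open>h x = h y\<close>, of i] that by (simp add: h_def)
    ultimately show "x = y"
      using prefix_count_model_carrier by (intro false_count_eqI[of x n y]) auto
  qed
  moreover have "carrier (Ik (Suc n)) \<subseteq> h ` carrier M"
  proof
    fix g assume g: "g \<in> carrier (Ik (Suc n))"
    define l where "l = map (\<lambda>j. g (Suc j) = g j) [0..<n]"
    have "h l = g"
      using g false_count_of_steps[of g n]
      by (fastforce simp: h_def l_def Ik_def PiE_def extensional_def restrict_def)
    moreover have "l \<in> carrier M" using prefix_count_model_carrier by (simp add: l_def)
    ultimately show "g \<in> h ` carrier M" by blast
  qed
  moreover have "h ` carrier M \<subseteq> carrier (Ik (Suc n))"
    using hom by (auto simp: hom_def)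
  ultimately show "h \<in> iso M (Ik (Suc n))"
    using hom by (simp add: iso_def bij_betw_def subset_antisym)
  show "h \<one>\<^bsub>M\<^esub> = \<one>\<^bsub>Ik (Suc n)\<^esub>"
    using prefix_count_model_false_count_one
    by (simp add: h_def Ik_def fun_eq_iff less_Suc_eq_le)
qed

end

lemma prefix_count_model_Mseq: "prefix_count_model n (Mseq n)"
proof (induction n)
  case 0
  then show ?case by (simp add: prefix_count_model_def)
next
  case (Suc n)
  then show ?case
    using prefix_count_model_mu by (cases "Mseq n") simp
qed

theorem proposition4p10:
  fixes k :: nat
  assumes "k \<ge> 1"
  shows "\<exists>h. h \<in> iso (Mk k) (Ik k) \<and> h \<one>\<^bsub>Mk k\<^esub> = \<one>\<^bsub>Ik k\<^esub>"
proof -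
  obtain M t f where E: "Mseq (k - 1) = (M, t, f)" by (cases "Mseq (k - 1)") auto
  have model: "prefix_count_model (k - 1) (M, t, f)"
    using prefix_count_model_Mseq[of "k - 1"] E by simp
  have "Mk k = M" "Suc (k - 1) = k" using E assms by (auto simp: Mk_def)
  then show ?thesis
    using false_count_iso_Ik[OF model] by auto
qed

end
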